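(* Let $\mathscr{X}$ be the class of functions defined in the context, let $\widehat x\in\mathscr X$ be the function with all coefficients $\theta_{m,k}=+1$, and let $x^*$ be the function defined in the context. Then: (a) $\displaystyle\max_{x\in\mathscr{X}}\max_{t\in[0,1]}|x(t)|=\max_{t\in[0,1]}\widehat x(t)=\frac13(2+\sqrt2)$, and the maximum of $\widehat x(t)$ is attained at $t=\frac13$ and $t=\frac23$. (b) $\displaystyle\max_{x\in\mathscr{X}}\max_{s,t\in[0,1]}|x(t)-x(s)|=\frac16(5+4\sqrt2)$, where the respective maxima are attained at $s=1/3$, $t=5/6$, and $x=x^*$.
   Context: The Faber--Schauder functions are $e_{0,0}(t):=(\min\{t,1-t\})^+$ and $e_{m,k}(t):=2^{-m/2}e_{0,0}(2^m t-k)$ for $t\in\mathbb R$, $m\ge1$, $k\in\mathbb Z$. For coefficients $\theta_{m,k}\in\{-1,+1\}$, the partial sums $x^n(t)=\sum_{m=0}^{n-1}\sum_{k=0}^{2^m-1}\theta_{m,k}e_{m,k}(t)$, $t\in[0,1]$, converge uniformly to a continuous function. $\mathscr X$ denotes the set of all functions $x\in C[0,1]$ of the form $x=\sum_{m=0}^\infty\sum_{k=0}^{2^m-1}\theta_{m,k}e_{m,k}$ with $\theta_{m,k}\in\{-1,+1\}$. Define $\widehat x:=\sum_{m=0}^\infty\sum_{k=0}^{2^m-1}e_{m,k}$ and $x^*:=e_{0,0}+\sum_{m=1}^\infty\Big(\sum_{k=0}^{2^{m-1}-1}e_{m,k}-\sum_{\ell=2^{m-1}}^{2^m-1}e_{m,\ell}\Big)$.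 *)

theory Defs
  imports "HOL-Analysis.Analysis"
begin

definition e00 :: "real \<Rightarrow> real" where
  "e00 t = max (min t (1 - t)) 0"

definition schauder :: "nat \<Rightarrow> nat \<Rightarrow> real \<Rightarrow> real" where
  "schauder m k t = 2 powr (- real m / 2) * e00 (2 ^ m * t - real k)"

definition FS_fun :: "(nat \<Rightarrow> nat \<Rightarrow> real) \<Rightarrow> real \<Rightarrow> real" where
  "FS_fun \<theta> t = (\<Sum>m. \<Sum>k<2^m. \<theta> m k * schauder m k t)"

definition FS_class :: "(real \<Rightarrow> real) set" where
  "FS_class = {x. \<exists>\<theta>. (\<forall>m k. \<theta> m k \<in> {-1, 1}) \<and> x = FS_fun \<theta>}"

definition xhat :: "real \<Rightarrow> real" where
  "xhat t = (\<Sum>m. \<Sum>k<2^m. schauder m k t)"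

definition xstar :: "real \<Rightarrow> real" where
  "xstar t = schauder 0 0 t +
     (\<Sum>m. (\<Sum>k<2^m. schauder (Suc m) k t) - (\<Sum>l\<in>{2^m..<2^(Suc m)}. schauder (Suc m) l t))"

end

theory Submission
  imports Defs
begin

(*
  Splitting the levels at t = 1/2 shows that every x in the class satisfies the self-similarity
    x t = th00 * e00 t + sqrt 2 / 2 * (xL (2t) + xR (2t - 1))
  with xL, xR again in the class (coefficients of the left and right halves of levels >= 1).
  An explicit envelope U with e00 t + sqrt 2 / 2 * (U (2t) + U (2t - 1)) <= U t and
  max U = (2 + sqrt 2)/3 therefore bounds all partial sums, by induction on the number of
  levels; the same recursion, split according to the halves containing s and t, bounds the
  oscillation by (5 + 4 sqrt 2)/6. For xhat the recursion at 1/3 and 2/3 is a linear system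
  whose solution is (2 + sqrt 2)/3 at both points, and xstar t = e00 t +
  sqrt 2 / 2 * (xhat (2t) - xhat (2t - 1)) attains the oscillation bound at 1/3 and 5/6.
*)

subsection \<open>The hat function and the self-similarity of the Schauder system\<close>

lemma e00_nonneg: "0 \<le> e00 t"
  by (simp add: e00_def)

lemma e00_le_half: "e00 t \<le> 1/2"
  by (simp add: e00_def max_def min_def)

lemma e00_eq_left: "0 \<le> t \<Longrightarrow> t \<le> 1/2 \<Longrightarrow> e00 t = t"
  by (simp add: e00_def)

lemma e00_eq_right: "1/2 \<le> t \<Longrightarrow> t \<le> 1 \<Longrightarrow> e00 t = 1 - t"
  by (simp add: e00_def)

lemma e00_eq_0_outside: "t \<le> 0 \<or> 1 \<le> t \<Longrightarrow> e00 t = 0"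
  by (auto simp add: e00_def)

lemma e00_reflect: "e00 (1 - t) = e00 t"
  by (simp add: e00_def min.commute)

lemma schauder_nonneg: "0 \<le> schauder m k t"
  by (simp add: schauder_def e00_nonneg)

lemma sqrt2_gt: "1.4 < sqrt (2::real)"
  by (rule real_less_rsqrt) (simp add: power2_eq_square)

lemma two_powr_neg_half_Suc:
  "(2::real) powr (- real (Suc m) / 2) = sqrt 2 / 2 * 2 powr (- real m / 2)"
proof -
  have "(2::real) powr (- real (Suc m) / 2) = 2 powr (-(1/2)) * 2 powr (- real m / 2)"
    by (simp add: powr_add[symmetric] diff_divide_distrib)
  also have "(2::real) powr (-(1/2)) = sqrt 2 / 2"
    by (simp add: powr_minus_divide powr_half_sqrt real_div_sqrt)
  finally show ?thesis .
qed

lemma schauder_Suc_left: "schauder (Suc m) k t = sqrt 2 / 2 * schauder m k (2*t)"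
  unfolding schauder_def two_powr_neg_half_Suc by (simp add: mult_ac)

lemma schauder_Suc_right: "schauder (Suc m) (2^m + k) t = sqrt 2 / 2 * schauder m k (2*t - 1)"
proof -
  have "(2::real) ^ Suc m * t - real (2^m + k) = 2 ^ m * (2 * t - 1) - real k"
    by (simp add: algebra_simps)
  then have "e00 (2 ^ Suc m * t - real (2^m + k)) = e00 (2 ^ m * (2 * t - 1) - real k)"
    by (rule arg_cong)
  then show ?thesis
    unfolding schauder_def two_powr_neg_half_Suc by (simp add: mult_ac)
qed

definition fs_level :: "(nat \<Rightarrow> nat \<Rightarrow> real) \<Rightarrow> nat \<Rightarrow> real \<Rightarrow> real" where
  "fs_level \<theta> m t = (\<Sum>k<2^m. \<theta> m k * schauder m k t)"

definition fs_partial :: "(nat \<Rightarrow> nat \<Rightarrow> real) \<Rightarrow> nat \<Rightarrow> real \<Rightarrow> real" where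
  "fs_partial \<theta> n t = (\<Sum>m<n. fs_level \<theta> m t)"

definition coeffs_left :: "(nat \<Rightarrow> nat \<Rightarrow> real) \<Rightarrow> nat \<Rightarrow> nat \<Rightarrow> real" where
  "coeffs_left \<theta> = (\<lambda>m k. \<theta> (Suc m) k)"

definition coeffs_right :: "(nat \<Rightarrow> nat \<Rightarrow> real) \<Rightarrow> nat \<Rightarrow> nat \<Rightarrow> real" where
  "coeffs_right \<theta> = (\<lambda>m k. \<theta> (Suc m) (2^m + k))"

definition unit_coeffs :: "(nat \<Rightarrow> nat \<Rightarrow> real) \<Rightarrow> bool" where
  "unit_coeffs \<theta> \<longleftrightarrow> (\<forall>m k. \<bar>\<theta> m k\<bar> \<le> 1)"

lemma unit_coeffs_left: "unit_coeffs \<theta> \<Longrightarrow> unit_coeffs (coeffs_left \<theta>)"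
  by (simp add: unit_coeffs_def coeffs_left_def)

lemma unit_coeffs_right: "unit_coeffs \<theta> \<Longrightarrow> unit_coeffs (coeffs_right \<theta>)"
  by (simp add: unit_coeffs_def coeffs_right_def)

lemma unit_coeffs_one: "unit_coeffs (\<lambda>_ _. 1)"
  by (simp add: unit_coeffs_def)

lemma unit_coeffs_if_signs: "(\<forall>m k. \<theta> m k \<in> {-1, 1}) \<Longrightarrow> unit_coeffs \<theta>"
  unfolding unit_coeffs_def by (metis abs_minus_cancel abs_one empty_iff insert_iff order_refl)

lemma sum_lessThan_add:
  fixes f :: "nat \<Rightarrow> 'a::comm_monoid_add"
  shows "sum f {..<a + b} = sum f {..<a} + (\<Sum>k<b. f (a + k))"
  by (induction b) (simp_all add: add.assoc)

lemma fs_level_0: "fs_level \<theta> 0 t = \<theta> 0 0 * e00 t"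
  by (simp add: fs_level_def schauder_def)

lemma fs_level_Suc:
  "fs_level \<theta> (Suc m) t =
     sqrt 2 / 2 * (fs_level (coeffs_left \<theta>) m (2*t) + fs_level (coeffs_right \<theta>) m (2*t - 1))"
proof -
  have "fs_level \<theta> (Suc m) t = (\<Sum>k<2^m + 2^m. \<theta> (Suc m) k * schauder (Suc m) k t)"
    by (simp add: fs_level_def mult_2)
  also have "\<dots> = (\<Sum>k<2^m. \<theta> (Suc m) k * schauder (Suc m) k t)
      + (\<Sum>k<2^m. \<theta> (Suc m) (2^m + k) * schauder (Suc m) (2^m + k) t)"
    by (rule sum_lessThan_add)
  also have "(\<Sum>k<2^m. \<theta> (Suc m) k * schauder (Suc m) k t)
      = sqrt 2 / 2 * fs_level (coeffs_left \<theta>) m (2*t)"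
    unfolding fs_level_def coeffs_left_def schauder_Suc_left sum_distrib_left
    by (simp add: mult.left_commute)
  also have "(\<Sum>k<2^m. \<theta> (Suc m) (2^m + k) * schauder (Suc m) (2^m + k) t)
      = sqrt 2 / 2 * fs_level (coeffs_right \<theta>) m (2*t - 1)"
    unfolding fs_level_def coeffs_right_def schauder_Suc_right sum_distrib_left
    by (simp add: mult.left_commute)
  finally show ?thesis
    by (simp add: distrib_left)
qed

lemma fs_partial_Suc:
  "fs_partial \<theta> (Suc n) t = \<theta> 0 0 * e00 t +
     sqrt 2 / 2 * (fs_partial (coeffs_left \<theta>) n (2*t) + fs_partial (coeffs_right \<theta>) n (2*t - 1))"
  unfolding fs_partial_def sum.lessThan_Suc_shift fs_level_Suc fs_level_0
  by (simp add: sum_distrib_left sum.distrib distrib_left)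

subsection \<open>An envelope invariant under the recursion\<close>

definition sup_bound :: real where
  "sup_bound = (2 + sqrt 2) / 3"

text \<open>Since (1 + \<surd>2)/3 = \<surd>2/2 \<cdot> sup_bound, the second term of the minimum is what one step of
  the recursion yields from the global bound alone.\<close>

definition envelope_core :: "real \<Rightarrow> real" where
  "envelope_core u = min sup_bound ((1 + sqrt 2) / 3 + e00 u)"

definition envelope :: "real \<Rightarrow> real" where
  "envelope u = (if 0 < u \<and> u < 1 then envelope_core u else 0)"

lemma half_sqrt2_mult_sup_bound: "sqrt 2 / 2 * sup_bound = (1 + sqrt 2) / 3"
proof -
  have "sqrt 2 / 2 * sup_bound = (2 * sqrt 2 + sqrt 2 * sqrt 2) / 6"
    by (simp add: sup_bound_def field_simps)
  also have "\<dots> = (1 + sqrt 2) / 3"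
    by simp
  finally show ?thesis .
qed

lemma envelope_core_le_sup_bound: "envelope_core u \<le> sup_bound"
  by (simp add: envelope_core_def)

lemma envelope_core_le: "envelope_core u \<le> (1 + sqrt 2) / 3 + e00 u"
  by (simp add: envelope_core_def)

lemma envelope_core_nonneg: "0 \<le> envelope_core u"
  using e00_nonneg[of u] by (simp add: envelope_core_def sup_bound_def)

lemma envelope_core_reflect: "envelope_core (1 - u) = envelope_core u"
  by (simp add: envelope_core_def e00_reflect)

lemma envelope_core_half_step:
  assumes "0 \<le> a" "a \<le> 1/2"
  shows "a + sqrt 2 / 2 * envelope_core (2*a) \<le> sup_bound"
proof -
  define s where "s = sqrt (2::real)"
  have ss: "s * s = 2" and s1: "1.4 < s"
    using sqrt2_gt by (auto simp: s_def)
  define u where "u = envelope_core (2*a)"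
  have uM: "u \<le> (2 + s) / 3"
    using envelope_core_le_sup_bound by (simp add: u_def sup_bound_def s_def)
  have ue: "u \<le> (1 + s) / 3 + e00 (2*a)"
    using envelope_core_le by (simp add: u_def s_def)
  have "a + s/2 * u \<le> (2 + s) / 3"
  proof (cases "a \<le> 1/6")
    case True
    have "s/2 * u \<le> s/2 * ((1 + s) / 3 + 2*a)"
      using ue e00_eq_left[of "2*a"] True assms s1 by (intro mult_left_mono) auto
    also have "\<dots> = (s + 2) / 6 + s*a"
      using ss by (simp add: algebra_simps add_divide_distrib)
    finally have "s/2 * u \<le> (s + 2) / 6 + s*a" .
    moreover have "s*a \<le> s/6"
      using mult_left_mono[of a "1/6" s] True s1 by simp
    ultimately show ?thesis
      using True unfolding add_divide_distrib by linarith
  next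
    case False
    show ?thesis
    proof (cases "a \<le> 1/3")
      case True
      have "s/2 * u \<le> s/2 * ((2 + s) / 3)"
        using uM s1 by (intro mult_left_mono) auto
      also have "\<dots> = (2 * s + 2) / 6"
        using ss by (simp add: algebra_simps add_divide_distrib)
      finally show ?thesis
        using True unfolding add_divide_distrib by linarith
    next
      case False
      have "s/2 * u \<le> s/2 * ((1 + s) / 3 + (1 - 2*a))"
        using ue e00_eq_right[of "2*a"] False assms s1 by (intro mult_left_mono) auto
      also have "\<dots> = (s + 2) / 6 + s/2 - s*a"
        using ss by (simp add: algebra_simps add_divide_distrib diff_divide_distrib)
      finally have "s/2 * u \<le> (s + 2) / 6 + s/2 - s*a" .
      moreover have "0 \<le> (s - 1) * (a - 1/3)"
        using False s1 by (intro mult_nonneg_nonneg) auto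
      moreover have "(s - 1) * (a - 1/3) = s*a - s/3 - a + 1/3"
        by (simp add: field_simps)
      ultimately show ?thesis
        unfolding add_divide_distrib by linarith
    qed
  qed
  then show ?thesis
    by (simp add: s_def u_def sup_bound_def)
qed

lemma envelope_core_half_excess:
  assumes "0 \<le> b" "b \<le> 1/2"
  shows "sqrt 2 / 2 * envelope_core (2*b) - b \<le> (2 * sqrt 2 + 1) / 6"
proof -
  define s where "s = sqrt (2::real)"
  have ss: "s * s = 2" and s1: "1.4 < s"
    using sqrt2_gt by (auto simp: s_def)
  define u where "u = envelope_core (2*b)"
  have uM: "u \<le> (2 + s) / 3"
    using envelope_core_le_sup_bound by (simp add: u_def sup_bound_def s_def)
  have ue: "u \<le> (1 + s) / 3 + e00 (2*b)"
    using envelope_core_le by (simp add: u_def s_def)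
  have "s/2 * u - b \<le> (2 * s + 1) / 6"
  proof (cases "b \<le> 1/6")
    case True
    have "s/2 * u \<le> s/2 * ((1 + s) / 3 + 2*b)"
      using ue e00_eq_left[of "2*b"] True assms s1 by (intro mult_left_mono) auto
    also have "\<dots> = (s + 2) / 6 + s*b"
      using ss by (simp add: algebra_simps add_divide_distrib)
    finally have "s/2 * u \<le> (s + 2) / 6 + s*b" .
    moreover have "0 \<le> (s - 1) * (1/6 - b)"
      using True s1 by (intro mult_nonneg_nonneg) auto
    moreover have "(s - 1) * (1/6 - b) = s/6 - s*b - 1/6 + b"
      by (simp add: field_simps)
    ultimately show ?thesis
      unfolding add_divide_distrib by linarith
  next
    case False
    have "s/2 * u \<le> s/2 * ((2 + s) / 3)"
      using uM s1 by (intro mult_left_mono) auto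
    also have "\<dots> = (2 * s + 2) / 6"
      using ss by (simp add: algebra_simps add_divide_distrib)
    finally show ?thesis
      using False unfolding add_divide_distrib by linarith
  qed
  then show ?thesis
    by (simp add: s_def u_def)
qed

lemma envelope_core_step:
  assumes "0 \<le> t" "t \<le> 1/2"
  shows "t + sqrt 2 / 2 * envelope_core (2*t) \<le> envelope_core t"
proof -
  have "sqrt 2 / 2 * envelope_core (2*t) \<le> sqrt 2 / 2 * sup_bound"
    using envelope_core_le_sup_bound by (intro mult_left_mono) auto
  then have "t + sqrt 2 / 2 * envelope_core (2*t) \<le> (1 + sqrt 2) / 3 + e00 t"
    using half_sqrt2_mult_sup_bound e00_eq_left[OF assms] by linarith
  then show ?thesis
    using envelope_core_half_step[OF assms] by (simp add: envelope_core_def)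
qed

lemma envelope_nonneg: "0 \<le> envelope u"
  using envelope_core_nonneg by (simp add: envelope_def)

lemma envelope_le_core: "envelope u \<le> envelope_core u"
  using envelope_core_nonneg by (simp add: envelope_def)

lemma envelope_le_sup_bound: "envelope u \<le> sup_bound"
  using envelope_le_core envelope_core_le_sup_bound order_trans by blast

lemma envelope_eq_0_outside: "u \<le> 0 \<or> 1 \<le> u \<Longrightarrow> envelope u = 0"
  by (auto simp: envelope_def)

lemma envelope_step: "e00 t + sqrt 2 / 2 * (envelope (2*t) + envelope (2*t - 1)) \<le> envelope t"
proof -
  consider "t \<le> 0 \<or> 1 \<le> t" | "0 < t" "t \<le> 1/2" | "1/2 < t" "t < 1"
    by linarith
  then show ?thesis
  proof cases
    case 1
    then show ?thesis
      by (auto simp: e00_eq_0_outside envelope_eq_0_outside)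
  next
    case 2
    have "sqrt 2 / 2 * (envelope (2*t) + envelope (2*t - 1)) \<le> sqrt 2 / 2 * envelope_core (2*t)"
      using 2 envelope_le_core envelope_eq_0_outside[of "2*t - 1"] by (intro mult_left_mono) auto
    moreover have "t + sqrt 2 / 2 * envelope_core (2*t) \<le> envelope_core t"
      using 2 by (intro envelope_core_step) auto
    moreover have "envelope t = envelope_core t" "e00 t = t"
      using 2 by (auto simp: envelope_def e00_eq_left)
    ultimately show ?thesis
      by linarith
  next
    case 3
    have "sqrt 2 / 2 * (envelope (2*t) + envelope (2*t - 1))
        \<le> sqrt 2 / 2 * envelope_core (2 * (1 - t))"
      using 3 envelope_le_core[of "2*t - 1"] envelope_core_reflect[of "2 * (1 - t)"]
        envelope_eq_0_outside[of "2*t"]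
      by (intro mult_left_mono) (auto simp: algebra_simps)
    moreover have "(1 - t) + sqrt 2 / 2 * envelope_core (2 * (1 - t)) \<le> envelope_core (1 - t)"
      using 3 by (intro envelope_core_step) auto
    moreover have "envelope t = envelope_core (1 - t)" "e00 t = 1 - t"
      using 3 envelope_core_reflect[of t] by (auto simp: envelope_def e00_eq_right)
    ultimately show ?thesis
      by linarith
  qed
qed

lemma abs_affine_le:
  fixes c y z1 z2 r :: real
  assumes "\<bar>c\<bar> \<le> 1" "0 \<le> r"
  shows "\<bar>c * y + r * (z1 + z2)\<bar> \<le> \<bar>y\<bar> + r * (\<bar>z1\<bar> + \<bar>z2\<bar>)"
proof -
  have "\<bar>c * y\<bar> \<le> \<bar>y\<bar>"
    using assms mult_right_mono[of "\<bar>c\<bar>" 1 "\<bar>y\<bar>"] by (simp add: abs_mult)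
  moreover have "\<bar>r * (z1 + z2)\<bar> \<le> r * (\<bar>z1\<bar> + \<bar>z2\<bar>)"
    using assms mult_left_mono[OF abs_triangle_ineq[of z1 z2], of r] by (simp add: abs_mult)
  ultimately show ?thesis
    using abs_triangle_ineq[of "c * y" "r * (z1 + z2)"] by linarith
qed

lemma abs_fs_partial_le_envelope: "unit_coeffs \<theta> \<Longrightarrow> \<bar>fs_partial \<theta> n t\<bar> \<le> envelope t"
proof (induction n arbitrary: \<theta> t)
  case 0
  then show ?case
    by (simp add: fs_partial_def envelope_nonneg)
next
  case (Suc n)
  have "\<bar>\<theta> 0 0\<bar> \<le> 1"
    using Suc.prems by (simp add: unit_coeffs_def)
  then have "\<bar>fs_partial \<theta> (Suc n) t\<bar> \<le> \<bar>e00 t\<bar> + sqrt 2 / 2 *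
      (\<bar>fs_partial (coeffs_left \<theta>) n (2*t)\<bar> + \<bar>fs_partial (coeffs_right \<theta>) n (2*t - 1)\<bar>)"
    unfolding fs_partial_Suc by (rule abs_affine_le) simp
  also have "\<dots> \<le> e00 t + sqrt 2 / 2 * (envelope (2*t) + envelope (2*t - 1))"
    using Suc.IH[OF unit_coeffs_left[OF Suc.prems]] Suc.IH[OF unit_coeffs_right[OF Suc.prems]]
    by (intro add_mono mult_left_mono) (auto simp: e00_nonneg)
  also have "\<dots> \<le> envelope t"
    by (rule envelope_step)
  finally show ?case .
qed

lemma fs_partial_eq_0_outside: "unit_coeffs \<theta> \<Longrightarrow> u \<le> 0 \<or> 1 \<le> u \<Longrightarrow> fs_partial \<theta> n u = 0"
  using abs_fs_partial_le_envelope[of \<theta> n u] envelope_eq_0_outside[of u] by simp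

subsection \<open>Passage to the limit\<close>

lemma abs_fs_level_le: "unit_coeffs \<theta> \<Longrightarrow> \<bar>fs_level \<theta> m t\<bar> \<le> fs_level (\<lambda>_ _. 1) m t"
proof -
  assume \<theta>: "unit_coeffs \<theta>"
  have "\<bar>fs_level \<theta> m t\<bar> \<le> (\<Sum>k<2^m. \<bar>\<theta> m k\<bar> * schauder m k t)"
    unfolding fs_level_def using sum_abs[of "\<lambda>k. \<theta> m k * schauder m k t"]
    by (simp add: abs_mult schauder_nonneg)
  also have "\<dots> \<le> (\<Sum>k<2^m. schauder m k t)"
    using \<theta> schauder_nonneg by (intro sum_mono mult_left_le_one_le) (auto simp: unit_coeffs_def)
  finally show ?thesis
    by (simp add: fs_level_def)
qed

lemma summable_fs_level:
  assumes "unit_coeffs \<theta>"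
  shows "summable (\<lambda>m. fs_level \<theta> m t)"
proof -
  have "summable (\<lambda>m. fs_level (\<lambda>_ _. 1) m t)"
  proof (rule summableI_nonneg_bounded)
    show "0 \<le> fs_level (\<lambda>_ _. 1) m t" for m
      by (simp add: fs_level_def schauder_nonneg sum_nonneg)
    show "(\<Sum>m<n. fs_level (\<lambda>_ _. 1) m t) \<le> sup_bound" for n
      using abs_fs_partial_le_envelope[OF unit_coeffs_one] envelope_le_sup_bound
      unfolding fs_partial_def by (meson abs_le_D1 order_trans)
  qed
  then show ?thesis
    by (rule summable_comparison_test') (use assms abs_fs_level_le in auto)
qed

lemma FS_fun_eq_suminf_fs_level: "FS_fun \<theta> t = (\<Sum>m. fs_level \<theta> m t)"
  by (simp add: FS_fun_def fs_level_def)

lemma fs_partial_tendsto: "unit_coeffs \<theta> \<Longrightarrow> (\<lambda>n. fs_partial \<theta> n t) \<longlonglongrightarrow> FS_fun \<theta> t"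
  unfolding FS_fun_eq_suminf_fs_level fs_partial_def by (rule summable_LIMSEQ[OF summable_fs_level])

lemma abs_FS_fun_le_envelope: "unit_coeffs \<theta> \<Longrightarrow> \<bar>FS_fun \<theta> t\<bar> \<le> envelope t"
  by (rule LIMSEQ_le_const2[OF tendsto_rabs[OF fs_partial_tendsto]])
    (auto intro: abs_fs_partial_le_envelope)

lemma FS_fun_eq_0_outside: "unit_coeffs \<theta> \<Longrightarrow> t \<le> 0 \<or> 1 \<le> t \<Longrightarrow> FS_fun \<theta> t = 0"
  using abs_FS_fun_le_envelope[of \<theta> t] envelope_eq_0_outside[of t] by simp

lemma FS_fun_rec:
  assumes "unit_coeffs \<theta>"
  shows "FS_fun \<theta> t = \<theta> 0 0 * e00 t +
    sqrt 2 / 2 * (FS_fun (coeffs_left \<theta>) (2*t) + FS_fun (coeffs_right \<theta>) (2*t - 1))"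
proof (rule LIMSEQ_unique)
  show "(\<lambda>n. fs_partial \<theta> (Suc n) t) \<longlonglongrightarrow> FS_fun \<theta> t"
    by (rule LIMSEQ_Suc[OF fs_partial_tendsto[OF assms]])
  show "(\<lambda>n. fs_partial \<theta> (Suc n) t) \<longlonglongrightarrow> \<theta> 0 0 * e00 t +
      sqrt 2 / 2 * (FS_fun (coeffs_left \<theta>) (2*t) + FS_fun (coeffs_right \<theta>) (2*t - 1))"
    unfolding fs_partial_Suc
    by (intro tendsto_intros fs_partial_tendsto unit_coeffs_left unit_coeffs_right assms)
qed

lemma FS_fun_uminus: "unit_coeffs \<theta> \<Longrightarrow> FS_fun (\<lambda>m k. - \<theta> m k) t = - FS_fun \<theta> t"
  unfolding FS_fun_eq_suminf_fs_level fs_level_def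
  by (simp add: sum_negf suminf_minus[OF summable_fs_level[unfolded fs_level_def]])

lemma FS_fun_cong: "(\<And>m k. k < 2^m \<Longrightarrow> \<theta> m k = \<theta>' m k) \<Longrightarrow> FS_fun \<theta> t = FS_fun \<theta>' t"
  unfolding FS_fun_def by (intro suminf_cong sum.cong) auto

subsection \<open>The oscillation bound\<close>

definition osc_bound :: real where
  "osc_bound = (5 + 4 * sqrt 2) / 6"

lemma envelope_core_pair_le_osc_bound:
  assumes "0 \<le> a" "a \<le> 1/2" "0 \<le> b" "b \<le> 1/2"
  shows "\<bar>a - b\<bar> + sqrt 2 / 2 * (envelope_core (2*a) + envelope_core (2*b)) \<le> osc_bound"
proof -
  have bound: "osc_bound = sup_bound + (2 * sqrt 2 + 1) / 6"
    by (simp add: osc_bound_def sup_bound_def field_simps)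
  have split: "sqrt 2 / 2 * (envelope_core (2*a) + envelope_core (2*b))
      = sqrt 2 / 2 * envelope_core (2*a) + sqrt 2 / 2 * envelope_core (2*b)"
    by (simp add: distrib_left)
  show ?thesis
  proof (cases "b \<le> a")
    case True
    then have "\<bar>a - b\<bar> = a - b"
      by simp
    then show ?thesis
      using envelope_core_half_step[of a] envelope_core_half_excess[of b] assms bound split
      by linarith
  next
    case False
    then have "\<bar>a - b\<bar> = b - a"
      by simp
    then show ?thesis
      using envelope_core_half_step[of b] envelope_core_half_excess[of a] assms bound split
      by linarith
  qed
qed

lemma osc_bound_step: "1/2 + sqrt 2 / 2 * osc_bound \<le> osc_bound"
proof -
  have "sqrt 2 / 2 * osc_bound = (5 * sqrt 2 + 4 * (sqrt 2 * sqrt 2)) / 12"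
    by (simp add: osc_bound_def field_simps)
  also have "\<dots> = (5 * sqrt 2 + 8) / 12"
    by simp
  finally show ?thesis
    using sqrt2_gt unfolding osc_bound_def add_divide_distrib by linarith
qed

lemma abs_e00_diff_le: "\<bar>e00 t - e00 u\<bar> \<le> 1/2"
  using e00_nonneg[of t] e00_nonneg[of u] e00_le_half[of t] e00_le_half[of u] by linarith

lemma fs_partial_diff_le_osc_bound:
  assumes "unit_coeffs \<theta>" "0 \<le> t1" "t1 \<le> t2" "t2 \<le> 1"
  shows "\<bar>fs_partial \<theta> n t1 - fs_partial \<theta> n t2\<bar> \<le> osc_bound"
  using assms
proof (induction n arbitrary: \<theta> t1 t2)
  case 0
  then show ?case
    by (simp add: fs_partial_def osc_bound_def)
next
  case (Suc n)
  define r where "r = sqrt (2::real) / 2"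
  define A where "A = fs_partial (coeffs_left \<theta>) n"
  define B where "B = fs_partial (coeffs_right \<theta>) n"
  have A: "unit_coeffs (coeffs_left \<theta>)" and B: "unit_coeffs (coeffs_right \<theta>)"
    using Suc.prems unit_coeffs_left unit_coeffs_right by auto
  have "\<bar>\<theta> 0 0\<bar> \<le> 1"
    using Suc.prems by (simp add: unit_coeffs_def)
  then have main: "\<bar>fs_partial \<theta> (Suc n) t1 - fs_partial \<theta> (Suc n) t2\<bar> \<le> \<bar>e00 t1 - e00 t2\<bar>
      + r * (\<bar>A (2*t1) - A (2*t2)\<bar> + \<bar>B (2*t1 - 1) - B (2*t2 - 1)\<bar>)"
    using abs_affine_le[of "\<theta> 0 0" r "e00 t1 - e00 t2" "A (2*t1) - A (2*t2)" "B (2*t1 - 1) - B (2*t2 - 1)"]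
    by (simp add: fs_partial_Suc A_def B_def r_def algebra_simps)
  have r_step: "1/2 + r * osc_bound \<le> osc_bound"
    using osc_bound_step by (simp add: r_def)
  have same_half: "\<bar>fs_partial \<theta> (Suc n) t1 - fs_partial \<theta> (Suc n) t2\<bar> \<le> osc_bound"
    if "\<bar>A (2*t1) - A (2*t2)\<bar> + \<bar>B (2*t1 - 1) - B (2*t2 - 1)\<bar> \<le> osc_bound"
  proof -
    have "r * (\<bar>A (2*t1) - A (2*t2)\<bar> + \<bar>B (2*t1 - 1) - B (2*t2 - 1)\<bar>) \<le> r * osc_bound"
      using that by (intro mult_left_mono) (simp_all add: r_def)
    then show ?thesis
      using main r_step abs_e00_diff_le[of t1 t2] by linarith
  qed
  consider "t2 \<le> 1/2" | "1/2 \<le> t1" | "t1 \<le> 1/2" "1/2 \<le> t2"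
    by linarith
  then show ?case
  proof cases
    case 1
    then show ?thesis
      using Suc.prems Suc.IH[OF A, of "2*t1" "2*t2"] fs_partial_eq_0_outside[OF B]
      by (intro same_half) (simp add: A_def B_def)
  next
    case 2
    then show ?thesis
      using Suc.prems Suc.IH[OF B, of "2*t1 - 1" "2*t2 - 1"] fs_partial_eq_0_outside[OF A]
      by (intro same_half) (simp add: A_def B_def)
  next
    case 3
    \<comment> \<open>Only A at 2 t1 and B at 2 t2 - 1 survive; the envelope bounds them separately.\<close>
    have "\<bar>A (2*t1) - A (2*t2)\<bar> + \<bar>B (2*t1 - 1) - B (2*t2 - 1)\<bar>
        \<le> envelope_core (2*t1) + envelope_core (2 * (1 - t2))"
      using 3 abs_fs_partial_le_envelope[OF A, of n "2*t1"] abs_fs_partial_le_envelope[OF B, of n "2*t2 - 1"]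
        envelope_le_core[of "2*t1"] envelope_le_core[of "2*t2 - 1"] envelope_core_reflect[of "2 * (1 - t2)"]
        fs_partial_eq_0_outside[OF A, of "2*t2"] fs_partial_eq_0_outside[OF B, of "2*t1 - 1"]
      by (simp add: A_def B_def algebra_simps)
    then have "r * (\<bar>A (2*t1) - A (2*t2)\<bar> + \<bar>B (2*t1 - 1) - B (2*t2 - 1)\<bar>)
        \<le> r * (envelope_core (2*t1) + envelope_core (2 * (1 - t2)))"
      by (intro mult_left_mono) (simp_all add: r_def)
    moreover have "\<bar>t1 - (1 - t2)\<bar> + r * (envelope_core (2*t1) + envelope_core (2 * (1 - t2))) \<le> osc_bound"
      unfolding r_def using 3 Suc.prems by (intro envelope_core_pair_le_osc_bound) auto
    moreover have "\<bar>e00 t1 - e00 t2\<bar> = \<bar>t1 - (1 - t2)\<bar>"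
      using 3 Suc.prems by (simp add: e00_eq_left e00_eq_right)
    ultimately show ?thesis
      using main by linarith
  qed
qed

lemma abs_FS_fun_diff_le_osc_bound:
  assumes "unit_coeffs \<theta>" "s \<in> {0..1}" "t \<in> {0..1}"
  shows "\<bar>FS_fun \<theta> t - FS_fun \<theta> s\<bar> \<le> osc_bound"
proof (rule LIMSEQ_le_const2[OF tendsto_rabs[OF tendsto_diff[OF fs_partial_tendsto fs_partial_tendsto]]])
  have "\<bar>fs_partial \<theta> n t - fs_partial \<theta> n s\<bar> \<le> osc_bound" for n
  proof (cases "s \<le> t")
    case True
    then show ?thesis
      using fs_partial_diff_le_osc_bound[OF assms(1), of s t n] assms(2,3) by (simp add: abs_minus_commute)
  next
    case False
    then show ?thesis
      using fs_partial_diff_le_osc_bound[OF assms(1), of t s n] assms(2,3) by simp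
  qed
  then show "\<exists>N. \<forall>n\<ge>N. \<bar>fs_partial \<theta> n t - fs_partial \<theta> n s\<bar> \<le> osc_bound"
    by blast
qed (use assms in auto)

subsection \<open>The extremal functions\<close>

lemma FS_fun_one: "FS_fun (\<lambda>_ _. 1) = xhat"
  by (simp add: fun_eq_iff FS_fun_def xhat_def)

lemma xhat_eq_0_outside: "t \<le> 0 \<or> 1 \<le> t \<Longrightarrow> xhat t = 0"
  using FS_fun_eq_0_outside[OF unit_coeffs_one] by (simp add: FS_fun_one)

lemma xhat_rec: "xhat t = e00 t + sqrt 2 / 2 * (xhat (2*t) + xhat (2*t - 1))"
  using FS_fun_rec[OF unit_coeffs_one, of t]
  by (simp add: FS_fun_one coeffs_left_def coeffs_right_def)

lemma xhat_one_third: "xhat (1/3) = sup_bound" and xhat_two_thirds: "xhat (2/3) = sup_bound"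
proof -
  have x: "xhat (1/3) = 1/3 + sqrt 2 / 2 * xhat (2/3)"
    using xhat_rec[of "1/3"] xhat_eq_0_outside[of "-1/3"] by (simp add: e00_def)
  have y: "xhat (2/3) = 1/3 + sqrt 2 / 2 * xhat (1/3)"
    using xhat_rec[of "2/3"] xhat_eq_0_outside[of "4/3"] by (simp add: e00_def)
  have "sqrt 2 / 2 * xhat (2/3) = sqrt 2 / 6 + xhat (1/3) / 2"
    unfolding y by (simp add: distrib_left mult.assoc[symmetric])
  then have "xhat (1/3) = 1/3 + sqrt 2 / 6 + xhat (1/3) / 2"
    using x by linarith
  then show x3: "xhat (1/3) = sup_bound"
    by (simp add: sup_bound_def field_simps)
  show "xhat (2/3) = sup_bound"
    using y half_sqrt2_mult_sup_bound by (simp add: x3 sup_bound_def field_simps)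
qed

definition xstar_coeffs :: "nat \<Rightarrow> nat \<Rightarrow> real" where
  "xstar_coeffs m k = (if m = 0 \<or> k < 2^(m - 1) then 1 else -1)"

lemma xstar_coeffs_signs: "xstar_coeffs m k \<in> {-1, 1}"
  by (simp add: xstar_coeffs_def)

lemma fs_level_xstar_coeffs_Suc:
  "fs_level xstar_coeffs (Suc m) t =
     (\<Sum>k<2^m. schauder (Suc m) k t) - (\<Sum>l\<in>{2^m..<2^(Suc m)}. schauder (Suc m) l t)"
proof -
  have "fs_level xstar_coeffs (Suc m) t
      = (\<Sum>k<2^m. xstar_coeffs (Suc m) k * schauder (Suc m) k t)
        + (\<Sum>k<2^m. xstar_coeffs (Suc m) (2^m + k) * schauder (Suc m) (2^m + k) t)"
    using sum_lessThan_add[where a = "2^m" and b = "2^m"] by (simp add: fs_level_def mult_2)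
  also have "\<dots> = (\<Sum>k<2^m. schauder (Suc m) k t) - (\<Sum>k<2^m. schauder (Suc m) (2^m + k) t)"
    by (simp add: xstar_coeffs_def sum_negf)
  also have "(\<Sum>k<2^m. schauder (Suc m) (2^m + k) t) = (\<Sum>l\<in>{2^m..<2^(Suc m)}. schauder (Suc m) l t)"
    using sum.shift_bounds_nat_ivl[of "\<lambda>l. schauder (Suc m) l t" 0 "2^m" "2^m"]
    by (simp add: atLeast0LessThan add.commute mult_2)
  finally show ?thesis .
qed

lemma xstar_eq_FS_fun: "xstar = FS_fun xstar_coeffs"
proof
  fix t
  have "FS_fun xstar_coeffs t = fs_level xstar_coeffs 0 t + (\<Sum>m. fs_level xstar_coeffs (Suc m) t)"
    using suminf_split_head[OF summable_fs_level, of xstar_coeffs t] unit_coeffs_if_signs xstar_coeffs_signs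
    by (simp add: FS_fun_eq_suminf_fs_level)
  moreover have "fs_level xstar_coeffs 0 t = schauder 0 0 t"
    by (simp add: fs_level_def xstar_coeffs_def)
  ultimately show "xstar t = FS_fun xstar_coeffs t"
    by (simp add: xstar_def fs_level_xstar_coeffs_Suc)
qed

lemma xstar_rec: "xstar t = e00 t + sqrt 2 / 2 * (xhat (2*t) - xhat (2*t - 1))"
proof -
  have "FS_fun (coeffs_left xstar_coeffs) u = xhat u" for u
    using FS_fun_cong[of "coeffs_left xstar_coeffs" "\<lambda>_ _. 1" u]
    by (simp add: coeffs_left_def xstar_coeffs_def FS_fun_one)
  moreover have "FS_fun (coeffs_right xstar_coeffs) u = - xhat u" for u
    using FS_fun_uminus[OF unit_coeffs_one, of u]
    by (simp add: coeffs_right_def xstar_coeffs_def FS_fun_one)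
  moreover have "unit_coeffs xstar_coeffs"
    using unit_coeffs_if_signs xstar_coeffs_signs by blast
  ultimately show ?thesis
    using FS_fun_rec[of xstar_coeffs t] by (simp add: xstar_eq_FS_fun xstar_coeffs_def)
qed

lemma xstar_oscillation: "\<bar>xstar (5/6) - xstar (1/3)\<bar> = osc_bound"
proof -
  have "xstar (1/3) = 1/3 + sqrt 2 / 2 * sup_bound"
    using xstar_rec[of "1/3"] xhat_eq_0_outside[of "-1/3"] xhat_two_thirds by (simp add: e00_def)
  moreover have "xstar (5/6) = 1/6 - sqrt 2 / 2 * sup_bound"
    using xstar_rec[of "5/6"] xhat_eq_0_outside[of "5/3"] xhat_two_thirds by (simp add: e00_def)
  ultimately have "xstar (5/6) - xstar (1/3) = - osc_bound"
    unfolding half_sqrt2_mult_sup_bound by (simp add: osc_bound_def field_simps)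
  then show ?thesis
    by (simp add: osc_bound_def)
qed

lemma FS_class_abs_le: "x \<in> FS_class \<Longrightarrow> \<bar>x t\<bar> \<le> sup_bound"
  using abs_FS_fun_le_envelope envelope_le_sup_bound unit_coeffs_if_signs
  unfolding FS_class_def by (blast intro: order_trans)

lemma FS_class_diff_le: "x \<in> FS_class \<Longrightarrow> s \<in> {0..1} \<Longrightarrow> t \<in> {0..1} \<Longrightarrow> \<bar>x t - x s\<bar> \<le> osc_bound"
  using abs_FS_fun_diff_le_osc_bound unit_coeffs_if_signs unfolding FS_class_def by blast

theorem theorem2p2:
  shows "xhat \<in> FS_class
    \<and> (\<forall>x\<in>FS_class. \<forall>t\<in>{0..1}. \<bar>x t\<bar> \<le> (2 + sqrt 2) / 3)
    \<and> (\<forall>t\<in>{0..1}. xhat t \<le> (2 + sqrt 2) / 3)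
    \<and> xhat (1/3) = (2 + sqrt 2) / 3
    \<and> xhat (2/3) = (2 + sqrt 2) / 3
    \<and> xstar \<in> FS_class
    \<and> (\<forall>x\<in>FS_class. \<forall>s\<in>{0..1}. \<forall>t\<in>{0..1}. \<bar>x t - x s\<bar> \<le> (5 + 4 * sqrt 2) / 6)
    \<and> \<bar>xstar (5/6) - xstar (1/3)\<bar> = (5 + 4 * sqrt 2) / 6"
proof -
  have xhat: "xhat \<in> FS_class"
    unfolding FS_class_def using FS_fun_one by force
  have "xstar \<in> FS_class"
    unfolding FS_class_def xstar_eq_FS_fun using xstar_coeffs_signs by blast
  moreover have "xhat t \<le> sup_bound" for t
    using FS_class_abs_le[OF xhat, of t] by linarith
  ultimately show ?thesis
    using xhat FS_class_abs_le FS_class_diff_le xhat_one_third xhat_two_thirds xstar_oscillation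
    unfolding sup_bound_def osc_bound_def by blast
qed

end
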